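(* Let $\mathcal{N}=(D,P)$ be a broadcast network with client $P=(Q,I,\delta)$, let $F\subseteq Q$, and let $\mathcal{N}_F$ be the instrumented network. For configurations $c_0,c\in Q^k$: there is a computation $c_0\to^* c\Rightarrow_F c$ in $\mathcal{N}$ if and only if there is a computation $\tilde c_0\to^* c\to^+ c$ in $\mathcal{N}_F$, where $\tilde c_0\in\tilde Q^k$ is defined by $\tilde c_0[i]=\widetilde{c_0[i]}$.
   Context: A broadcast network is a pair $\mathcal{N}=(D,P)$ where $D$ is a finite set of messages and $P=(Q,I,\delta)$ is a finite automaton with $\delta\subseteq Q\times\mathrm{Ops}(D)\times Q$, $\mathrm{Ops}(D)=\{!a,\ ?a: a\in D\}$. A configuration is $c\in Q^k$ for some $k$, with entries $c[i]$. For $c,c'\in Q^k$ and $a\in D$, $c\xrightarrow{a}c'$ holds if there is $i$ with $(c[i],!a,c'[i])\in\delta$, a set $R\subseteq[1..k]\setminus\{i\}$ with $(c[j],?a,c'[j])\in\delta$ for $j\in R$, and $c[j]=c'[j]$ for $j\notin R\cup\{i\}$; then $\mathrm{type}(c\xrightarrow{a}c')=R\cup\{i\}$. $\to^*$ (resp. $\to^+$) means zero or more (resp. at least one) transitions. A finite computation $c_1\to\cdots\to c_n$ with $n\ge2$ is good for $F$, written $c_1\Rightarrow_F c_n$, if every client $i$ with $i\in\mathrm{type}(c_j\to c_{j+1})$ for some $j$ satisfies $c_k[i]\in F$ for some $k\in[1..n]$. The instrumented network is $\mathcal{N}_F=(D\cup\{n\},P_F)$ with a fresh message $n\notin D$ and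 client $P_F=(\bar Q,\tilde I,\bar\delta)$, where $\bar Q=Q\cup\hat Q\cup\tilde Q$ with $\hat Q=\{\hat q: q\in Q\}$ and $\tilde Q=\{\tilde q: q\in Q\}$ two disjoint copies of $Q$, $\tilde I=\{\tilde q: q\in I\}$, and $\bar\delta$ contains exactly: for every $(q,o,q')\in\delta$ the transitions $(q,o,\hat q')$, $(\hat q,o,\hat q')$, $(\tilde q,o,\tilde q')$; for every $q\in F$ the transition $(\hat q,!n,\tilde q)$; for every $q\in Q$ the transition $(\tilde q,!n,q)$. *)

theory Defs
  imports Main
begin

datatype 'd bop = Snd 'd | Rcv 'd

definition Ops :: "'d set \<Rightarrow> 'd bop set" where
  "Ops D = Snd ` D \<union> Rcv ` D"

text \<open>A transition of the network with message a and type T (= R \<union> {i}):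
  the configuration is a list of client states; indices are 0-based.\<close>
definition step_type ::
  "('q \<times> 'd bop \<times> 'q) set \<Rightarrow> 'q list \<Rightarrow> 'd \<Rightarrow> nat set \<Rightarrow> 'q list \<Rightarrow> bool" where
  "step_type \<delta> c a T c' \<longleftrightarrow>
     length c' = length c \<and>
     (\<exists>i R. i < length c \<and> R \<subseteq> {..<length c} - {i} \<and> T = R \<union> {i} \<and>
        (c ! i, Snd a, c' ! i) \<in> \<delta> \<and>
        (\<forall>j\<in>R. (c ! j, Rcv a, c' ! j) \<in> \<delta>) \<and>
        (\<forall>j<length c. j \<notin> R \<union> {i} \<longrightarrow> c ! j = c' ! j))"

definition step :: "('q \<times> 'd bop \<times> 'q) set \<Rightarrow> 'q list \<Rightarrow> 'q list \<Rightarrow> bool" where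
  "step \<delta> c c' \<longleftrightarrow> (\<exists>a T. step_type \<delta> c a T c')"

definition good :: "('q \<times> 'd bop \<times> 'q) set \<Rightarrow> 'q set \<Rightarrow> 'q list \<Rightarrow> 'q list \<Rightarrow> bool" where
  "good \<delta> F c c' \<longleftrightarrow>
     (\<exists>cs ls. length cs \<ge> 2 \<and> length ls = length cs - 1 \<and>
        hd cs = c \<and> last cs = c' \<and>
        (\<forall>j < length ls. step_type \<delta> (cs ! j) (fst (ls ! j)) (snd (ls ! j)) (cs ! Suc j)) \<and>
        (\<forall>j < length ls. \<forall>i \<in> snd (ls ! j). \<exists>k < length cs. cs ! k ! i \<in> F))"

text \<open>States of P_F: Q, \<hat>Q, \<tilde>Q; messages: D \<union> {n}, with n represented by None.\<close>
datatype 'q istate = Plain 'q | Hat 'q | Tilde 'q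

definition inst_delta ::
  "'q set \<Rightarrow> ('q \<times> 'd bop \<times> 'q) set \<Rightarrow> 'q set \<Rightarrow> ('q istate \<times> 'd option bop \<times> 'q istate) set" where
  "inst_delta Q \<delta> F =
     {(Plain q, map_bop Some op, Hat q') | q op q'. (q, op, q') \<in> \<delta>} \<union>
     {(Hat q, map_bop Some op, Hat q') | q op q'. (q, op, q') \<in> \<delta>} \<union>
     {(Tilde q, map_bop Some op, Tilde q') | q op q'. (q, op, q') \<in> \<delta>} \<union>
     {(Hat q, Snd None, Tilde q) | q. q \<in> F} \<union>
     {(Tilde q, Snd None, Plain q) | q. q \<in> Q}"

end

(*
  Forgetting which copy of Q an instrumented state lies in projects runs of N_F onto runs of N:
  a step with a message of D projects to a step of the same type and an n-step to no step at all.

  Forward direction: the tilde copy simulates c0 ->* c verbatim, and n-steps then move every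
  client from the tilde copy to Q. A good cycle c => c is simulated greedily: a client enters the
  hat copy when it first takes part in a step and is sent on to the tilde copy as soon as it is in
  an F-state. Every participant visits F, and one that does so only before its first step is idle
  until then and hence, the run being a cycle, back in that F-state at the end; so no client is
  left hatted, and a last round of n-steps brings everyone back to Q.

  Backward direction: a client can only return from the hat copy to Q through a step
  Hat q -n-> Tilde q with q in F, and from Q every step leads into the hat copy. So in a cycle
  from Q^k back to Q^k, whose first step cannot be an n-step, every client that takes part in a
  step passes through F.
*)
theory Submission imports Defs begin

section \<open>Projection of instrumented transitions\<close>

fun proj :: "'q istate \<Rightarrow> 'q" where
  "proj (Plain q) = q" | "proj (Hat q) = q" | "proj (Tilde q) = q"

fun lift :: "'q istate \<Rightarrow> 'q \<Rightarrow> 'q istate" where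
  "lift (Plain _) q = Hat q" | "lift (Hat _) q = Hat q" | "lift (Tilde _) q = Tilde q"

lemma proj_lift [simp]: "proj (lift y q) = q"
  by (cases y) auto

lemma proj_comp_Plain [simp]: "proj \<circ> Plain = id" and proj_comp_Tilde [simp]: "proj \<circ> Tilde = id"
  by auto

lemma inst_delta_Some_iff:
  fixes op :: "'d bop"
  shows "(y, map_bop Some op, y') \<in> inst_delta Q \<delta> F \<longleftrightarrow>
    (proj y, op, proj y') \<in> \<delta> \<and> y' = lift y (proj y')"
proof -
  have [simp]: "map_bop Some o1 = map_bop Some o2 \<longleftrightarrow> o1 = o2" for o1 o2 :: "'d bop"
    by (cases o1; cases o2) auto
  have [simp]: "map_bop Some op \<noteq> Snd None"
    by (cases op) auto
  show ?thesis
    by (cases y) (auto simp: inst_delta_def)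
qed

lemma inst_delta_Snd_iff:
  "(y, Snd (Some a), y') \<in> inst_delta Q \<delta> F \<longleftrightarrow> (proj y, Snd a, proj y') \<in> \<delta> \<and> y' = lift y (proj y')"
  using inst_delta_Some_iff[of y "Snd a"] by simp

lemma inst_delta_Rcv_iff:
  "(y, Rcv (Some a), y') \<in> inst_delta Q \<delta> F \<longleftrightarrow> (proj y, Rcv a, proj y') \<in> \<delta> \<and> y' = lift y (proj y')"
  using inst_delta_Some_iff[of y "Rcv a"] by simp

lemma inst_delta_Snd_None_iff:
  "(y, Snd None, y') \<in> inst_delta Q \<delta> F \<longleftrightarrow>
    (\<exists>q\<in>F. y = Hat q \<and> y' = Tilde q) \<or> (\<exists>q\<in>Q. y = Tilde q \<and> y' = Plain q)"
proof -
  have "Snd None \<noteq> map_bop Some op" for op :: "'d bop"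
    by (cases op) auto
  then show ?thesis
    by (auto simp: inst_delta_def)
qed

lemma inst_delta_Rcv_None: "(y, Rcv None, y') \<notin> inst_delta Q \<delta> F"
proof -
  have "Rcv None \<noteq> map_bop Some op" for op :: "'d bop"
    by (cases op) auto
  then show ?thesis
    by (auto simp: inst_delta_def)
qed

lemma step_typeE:
  assumes "step_type \<delta> c a T c'"
  obtains i R where "length c' = length c" "i < length c" "R \<subseteq> {..<length c} - {i}" "T = R \<union> {i}"
    "(c ! i, Snd a, c' ! i) \<in> \<delta>" "\<forall>j\<in>R. (c ! j, Rcv a, c' ! j) \<in> \<delta>"
    "\<forall>j<length c. j \<notin> T \<longrightarrow> c ! j = c' ! j"
  using assms unfolding step_type_def by force

lemma step_type_length: "step_type \<delta> c a T c' \<Longrightarrow> length c' = length c"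
  by (erule step_typeE)

lemma step_type_subset: "step_type \<delta> c a T c' \<Longrightarrow> T \<subseteq> {..<length c}"
  by (erule step_typeE) auto

lemma step_type_frame: "step_type \<delta> c a T c' \<Longrightarrow> j < length c \<Longrightarrow> j \<notin> T \<Longrightarrow> c ! j = c' ! j"
  by (erule step_typeE) auto

lemma step_single_send:
  assumes "i < length c" "(c ! i, Snd a, q) \<in> \<delta>"
  shows "step \<delta> c (c[i := q])"
  unfolding step_def step_type_def using assms
  by (intro exI[of _ a] exI[of _ "{i}"] conjI exI[of _ i] exI[of _ "{}"]) auto

definition lift_config :: "nat set \<Rightarrow> 'q istate list \<Rightarrow> 'q list \<Rightarrow> 'q istate list" where
  "lift_config T x c' = map (\<lambda>i. if i \<in> T then lift (x ! i) (c' ! i) else x ! i) [0..<length x]"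

lemma length_lift_config [simp]: "length (lift_config T x c') = length x"
  by (simp add: lift_config_def)

lemma nth_lift_config:
  "i < length x \<Longrightarrow> lift_config T x c' ! i = (if i \<in> T then lift (x ! i) (c' ! i) else x ! i)"
  by (simp add: lift_config_def)

lemma lift_config_Tilde:
  assumes "step_type \<delta> c a T c'"
  shows "lift_config T (map Tilde c) c' = map Tilde c'"
  using step_type_length[OF assms] step_type_frame[OF assms]
  by (intro nth_equalityI) (auto simp: nth_lift_config)

lemma step_type_lift_config:
  assumes "step_type \<delta> (map proj x) a T c'"
  shows "step_type (inst_delta Q \<delta> F) x (Some a) T (lift_config T x c')"
    and "map proj (lift_config T x c') = c'"
proof -
  obtain i R where len: "length c' = length x" and i: "i < length x" and R: "R \<subseteq> {..<length x} - {i}"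
    and T: "T = R \<union> {i}" and send: "(map proj x ! i, Snd a, c' ! i) \<in> \<delta>"
    and rcv: "\<forall>j\<in>R. (map proj x ! j, Rcv a, c' ! j) \<in> \<delta>"
    and frame: "\<forall>j<length x. j \<notin> T \<longrightarrow> map proj x ! j = c' ! j"
    using assms by (rule step_typeE) simp
  show "map proj (lift_config T x c') = c'"
    using len frame by (intro nth_equalityI) (auto simp: nth_lift_config)
  show "step_type (inst_delta Q \<delta> F) x (Some a) T (lift_config T x c')"
    unfolding step_type_def using i R T send rcv
    by (intro conjI exI[of _ i] exI[of _ R])
      (auto simp: nth_lift_config inst_delta_Snd_iff inst_delta_Rcv_iff subset_iff)
qed

lemma step_type_proj:
  assumes "step_type (inst_delta Q \<delta> F) x (Some a) T x'"
  shows "step_type \<delta> (map proj x) a T (map proj x')"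
    and "x' = lift_config T x (map proj x')"
proof -
  obtain i R where len: "length x' = length x" and i: "i < length x" and R: "R \<subseteq> {..<length x} - {i}"
    and T: "T = R \<union> {i}" and send: "(x ! i, Snd (Some a), x' ! i) \<in> inst_delta Q \<delta> F"
    and rcv: "\<forall>j\<in>R. (x ! j, Rcv (Some a), x' ! j) \<in> inst_delta Q \<delta> F"
    and frame: "\<forall>j<length x. j \<notin> T \<longrightarrow> x ! j = x' ! j"
    using assms by (rule step_typeE)
  show "step_type \<delta> (map proj x) a T (map proj x')"
    unfolding step_type_def using len i R T send rcv frame
    by (intro conjI exI[of _ i] exI[of _ R]) (auto simp: inst_delta_Snd_iff inst_delta_Rcv_iff)
  show "x' = lift_config T x (map proj x')"
    using len T send rcv frame
    by (intro nth_equalityI) (auto simp: nth_lift_config inst_delta_Snd_iff inst_delta_Rcv_iff)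
qed

lemma step_type_None:
  assumes "step_type (inst_delta Q \<delta> F) x None T x'"
  obtains i where "i < length x" "x' = x[i := x' ! i]" "(x ! i, Snd None, x' ! i) \<in> inst_delta Q \<delta> F"
proof -
  obtain i R where len: "length x' = length x" and i: "i < length x" and T: "T = R \<union> {i}"
    and send: "(x ! i, Snd None, x' ! i) \<in> inst_delta Q \<delta> F"
    and rcv: "\<forall>j\<in>R. (x ! j, Rcv None, x' ! j) \<in> inst_delta Q \<delta> F"
    and frame: "\<forall>j<length x. j \<notin> T \<longrightarrow> x ! j = x' ! j"
    using assms by (rule step_typeE)
  have "R = {}"
    using rcv inst_delta_Rcv_None by blast
  then have "x' = x[i := x' ! i]"
    using len i T frame by (intro nth_equalityI) (auto simp: nth_list_update)
  with i send that show thesis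
    by blast
qed

lemma rtranclp_step_map:
  assumes send: "\<And>y. g y \<noteq> y \<Longrightarrow> \<exists>a. (y, Snd a, g y) \<in> \<Delta>"
  shows "(step \<Delta>)\<^sup>*\<^sup>* x (map g x)"
proof -
  have "(step \<Delta>)\<^sup>*\<^sup>* x (map g (take k x) @ drop k x)" if "k \<le> length x" for k
    using that
  proof (induction k)
    case 0
    show ?case by simp
  next
    case (Suc k)
    let ?z = "map g (take k x) @ drop k x"
    have k: "k < length x" and zk: "?z ! k = x ! k"
      using Suc.prems by (auto simp: nth_append)
    have next_z: "?z[k := g (x ! k)] = map g (take (Suc k) x) @ drop (Suc k) x"
      using k by (simp add: take_Suc_conv_app_nth list_update_append Cons_nth_drop_Suc[OF k, symmetric])
    have "(step \<Delta>)\<^sup>=\<^sup>= ?z (?z[k := g (x ! k)])"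
    proof (cases "g (x ! k) = x ! k")
      case True
      then show ?thesis
        using list_update_id[of ?z k] zk by simp
    next
      case False
      then obtain a where "(?z ! k, Snd a, g (x ! k)) \<in> \<Delta>"
        using send zk by metis
      then show ?thesis
        using k by (auto intro: step_single_send)
    qed
    moreover have "(step \<Delta>)\<^sup>*\<^sup>* x ?z"
      using Suc by simp
    ultimately show ?case
      unfolding next_z by auto
  qed
  from this[of "length x"] show ?thesis by simp
qed

definition hat_to_tilde :: "'q set \<Rightarrow> 'q istate \<Rightarrow> 'q istate" where
  "hat_to_tilde F y = (case y of Hat q \<Rightarrow> if q \<in> F then Tilde q else y | _ \<Rightarrow> y)"

definition tilde_to_plain :: "'q set \<Rightarrow> 'q istate \<Rightarrow> 'q istate" where
  "tilde_to_plain Q y = (case y of Tilde q \<Rightarrow> if q \<in> Q then Plain q else y | _ \<Rightarrow> y)"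

lemma rtranclp_hat_to_tilde: "(step (inst_delta Q \<delta> F))\<^sup>*\<^sup>* x (map (hat_to_tilde F) x)"
proof (rule rtranclp_step_map)
  fix y :: "'a istate"
  assume "hat_to_tilde F y \<noteq> y"
  then have "(y, Snd None, hat_to_tilde F y) \<in> inst_delta Q \<delta> F"
    by (cases y) (auto simp: hat_to_tilde_def inst_delta_Snd_None_iff split: if_splits)
  then show "\<exists>a. (y, Snd a, hat_to_tilde F y) \<in> inst_delta Q \<delta> F" ..
qed

lemma rtranclp_tilde_to_plain: "(step (inst_delta Q \<delta> F))\<^sup>*\<^sup>* x (map (tilde_to_plain Q) x)"
proof (rule rtranclp_step_map)
  fix y :: "'a istate"
  assume "tilde_to_plain Q y \<noteq> y"
  then have "(y, Snd None, tilde_to_plain Q y) \<in> inst_delta Q \<delta> F"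
    by (cases y) (auto simp: tilde_to_plain_def inst_delta_Snd_None_iff split: if_splits)
  then show "\<exists>a. (y, Snd a, tilde_to_plain Q y) \<in> inst_delta Q \<delta> F" ..
qed

lemma map_proj_step_None:
  assumes "step_type (inst_delta Q \<delta> F) x None T x'"
  shows "map proj x' = map proj x"
proof -
  obtain i where i: "i < length x" and x': "x' = x[i := x' ! i]"
    and send: "(x ! i, Snd None, x' ! i) \<in> inst_delta Q \<delta> F"
    using assms by (rule step_type_None)
  have "proj (x' ! i) = proj (x ! i)"
    using send by (auto simp: inst_delta_Snd_None_iff)
  then show ?thesis
    using i by (subst x') (metis map_update list_update_id nth_map)
qed

lemma rtranclp_step_map_Tilde:
  "(step \<delta>)\<^sup>*\<^sup>* c c' \<Longrightarrow> (step (inst_delta Q \<delta> F))\<^sup>*\<^sup>* (map Tilde c) (map Tilde c')"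
proof (induction rule: rtranclp_induct)
  case (step c' c'')
  then obtain a T where st: "step_type \<delta> c' a T c''"
    unfolding step_def by blast
  then have "step_type \<delta> (map proj (map Tilde c')) a T c''"
    by simp
  then have "step_type (inst_delta Q \<delta> F) (map Tilde c') (Some a) T (map Tilde c'')"
    using step_type_lift_config(1) lift_config_Tilde[OF st] by metis
  with step.IH show ?case
    unfolding step_def by (blast intro: rtranclp.rtrancl_into_rtrancl)
qed simp

lemma rtranclp_step_map_proj:
  "(step (inst_delta Q \<delta> F))\<^sup>*\<^sup>* x y \<Longrightarrow> (step \<delta>)\<^sup>*\<^sup>* (map proj x) (map proj y)"
proof (induction rule: rtranclp_induct)
  case (step y z)
  then obtain a T where st: "step_type (inst_delta Q \<delta> F) y a T z"
    unfolding step_def by blast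
  show ?case
  proof (cases a)
    case None
    then show ?thesis using st step.IH by (simp add: map_proj_step_None)
  next
    case (Some b)
    then have "step \<delta> (map proj y) (map proj z)"
      using step_type_proj(1)[of Q \<delta> F y b T z] st unfolding step_def by auto
    with step.IH show ?thesis by (rule rtranclp.rtrancl_into_rtrancl)
  qed
qed simp

section \<open>Labelled runs\<close>

definition labelled_run :: "('q \<times> 'd bop \<times> 'q) set \<Rightarrow> 'q list list \<Rightarrow> ('d \<times> nat set) list \<Rightarrow> bool" where
  "labelled_run \<delta> cs ls \<longleftrightarrow> length cs = Suc (length ls) \<and>
     (\<forall>j<length ls. step_type \<delta> (cs ! j) (fst (ls ! j)) (snd (ls ! j)) (cs ! Suc j))"

definition participants :: "('d \<times> nat set) list \<Rightarrow> nat set" where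
  "participants ls = (\<Union>l\<in>set ls. snd l)"

lemma participants_Nil [simp]: "participants [] = {}"
  and participants_Cons [simp]: "participants (l # ls) = snd l \<union> participants ls"
  by (auto simp: participants_def)

lemma participants_take_Suc:
  "j < length ls \<Longrightarrow> participants (take (Suc j) ls) = participants (take j ls) \<union> snd (ls ! j)"
  by (auto simp: participants_def take_Suc_conv_app_nth)

lemma participants_take_mono: "k \<le> j \<Longrightarrow> participants (take k ls) \<subseteq> participants (take j ls)"
  unfolding participants_def by (meson UN_mono order_refl set_take_subset_set_take)

lemma labelled_run_singleton: "labelled_run \<delta> [c] []"
  by (simp add: labelled_run_def)

lemma labelled_run_Cons:
  assumes "labelled_run \<delta> cs ls" "step_type \<delta> c a T (hd cs)"
  shows "labelled_run \<delta> (c # cs) ((a, T) # ls)"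
proof -
  have "cs \<noteq> []"
    using assms(1) by (auto simp: labelled_run_def)
  then have "step_type \<delta> ((c # cs) ! j) (fst (((a, T) # ls) ! j)) (snd (((a, T) # ls) ! j))
      ((c # cs) ! Suc j)"
    if "j < Suc (length ls)" for j
    using assms that by (cases j) (auto simp: labelled_run_def hd_conv_nth)
  then show ?thesis
    using assms(1) by (simp add: labelled_run_def)
qed

lemma good_iff_labelled_run:
  "good \<delta> F c c' \<longleftrightarrow> (\<exists>cs ls. labelled_run \<delta> cs ls \<and> ls \<noteq> [] \<and> hd cs = c \<and> last cs = c' \<and>
     (\<forall>i\<in>participants ls. \<exists>s\<in>set cs. s ! i \<in> F))"
proof -
  have "(\<exists>k<length cs. cs ! k ! i \<in> F) \<longleftrightarrow> (\<exists>s\<in>set cs. s ! i \<in> F)" for i and cs :: "'a list list"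
    by (metis in_set_conv_nth)
  then have participation: "(\<forall>j<length ls. \<forall>i\<in>snd (ls ! j). \<exists>k<length cs. cs ! k ! i \<in> F) \<longleftrightarrow>
      (\<forall>i\<in>participants ls. \<exists>s\<in>set cs. s ! i \<in> F)"
    for cs :: "'a list list" and ls :: "('b \<times> nat set) list"
    by (simp add: participants_def all_set_conv_all_nth)
  show ?thesis
    unfolding good_def labelled_run_def participation
    by (intro ex_cong1) (auto simp flip: length_greater_0_conv)
qed

section \<open>Simulating a good cycle in the instrumented network\<close>

definition mark :: "bool \<Rightarrow> bool \<Rightarrow> 'q \<Rightarrow> 'q istate" where
  "mark active settled q = (if \<not> active then Plain q else if settled then Tilde q else Hat q)"

lemma proj_mark [simp]: "proj (mark active settled q) = q"
  by (simp add: mark_def)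

lemma hat_to_tilde_lift_mark:
  "(settled \<longrightarrow> active) \<Longrightarrow>
   hat_to_tilde F (if b then lift (mark active settled q) q' else mark active settled q') =
     mark (active \<or> b) (settled \<or> (active \<or> b) \<and> q' \<in> F) q'"
  by (auto simp: mark_def hat_to_tilde_def)

lemma tilde_to_plain_mark:
  "q \<in> Q \<Longrightarrow> (active \<longrightarrow> settled) \<Longrightarrow> tilde_to_plain Q (mark active settled q) = Plain q"
  by (auto simp: mark_def tilde_to_plain_def)

text \<open>The configuration after j steps of the greedy simulation of the run cs: a client is settled
  once it has been in F at some time after its first step.\<close>
definition marked_config :: "'q set \<Rightarrow> 'q list list \<Rightarrow> ('d \<times> nat set) list \<Rightarrow> nat \<Rightarrow> 'q istate list" where
  "marked_config F cs ls j = map (\<lambda>i. mark (i \<in> participants (take j ls))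
     (\<exists>k\<le>j. cs ! k ! i \<in> F \<and> i \<in> participants (take k ls)) (cs ! j ! i)) [0..<length (cs ! j)]"

lemma map_proj_marked_config [simp]: "map proj (marked_config F cs ls j) = cs ! j"
  by (simp add: marked_config_def comp_def map_nth)

lemma marked_config_0: "marked_config F cs ls 0 = map Plain (cs ! 0)"
  by (rule nth_equalityI) (auto simp: marked_config_def mark_def participants_def)

context
  fixes \<delta> :: "('q \<times> 'd bop \<times> 'q) set" and cs ls
  assumes run: "labelled_run \<delta> cs ls"
begin

lemma step_type_run: "j < length ls \<Longrightarrow> step_type \<delta> (cs ! j) (fst (ls ! j)) (snd (ls ! j)) (cs ! Suc j)"
  using run by (simp add: labelled_run_def)

lemma length_nth_run: "k \<le> length ls \<Longrightarrow> length (cs ! k) = length (cs ! 0)"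
proof (induction k)
  case (Suc k)
  then show ?case using step_type_length[OF step_type_run] by simp
qed simp

lemma nth_run_before_participation:
  "k \<le> length ls \<Longrightarrow> i < length (cs ! 0) \<Longrightarrow> i \<notin> participants (take k ls) \<Longrightarrow>
    cs ! k ! i = cs ! 0 ! i"
proof (induction k)
  case (Suc k)
  then have k: "k < length ls"
    by simp
  then have i: "i < length (cs ! k)"
    using Suc.prems(2) length_nth_run[of k] by simp
  have "i \<notin> participants (take k ls)" "i \<notin> snd (ls ! k)"
    using Suc.prems(3) participants_take_Suc[OF k] by auto
  moreover have "cs ! k ! i = cs ! Suc k ! i" if "i \<notin> snd (ls ! k)"
    using step_type_frame[OF step_type_run[OF k] i that] .
  ultimately show ?case
    using Suc by simp
qed simp

lemma tranclp_marked_config_Suc: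
  assumes j: "j < length ls"
  shows "(step (inst_delta Q \<delta> F))\<^sup>+\<^sup>+ (marked_config F cs ls j) (marked_config F cs ls (Suc j))"
proof -
  let ?x = "marked_config F cs ls j" and ?T = "snd (ls ! j)"
  have st: "step_type \<delta> (map proj ?x) (fst (ls ! j)) ?T (cs ! Suc j)"
    using step_type_run[OF j] by simp
  have len: "length (cs ! Suc j) = length (cs ! j)"
    using step_type_length[OF st] by (simp add: marked_config_def)
  have "map (hat_to_tilde F) (lift_config ?T ?x (cs ! Suc j)) = marked_config F cs ls (Suc j)"
  proof (rule nth_equalityI)
    fix i
    assume "i < length (map (hat_to_tilde F) (lift_config ?T ?x (cs ! Suc j)))"
    then have i: "i < length (cs ! j)"
      by (simp add: marked_config_def)
    define active where "active = (i \<in> participants (take j ls))"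
    define settled where "settled = (\<exists>k\<le>j. cs ! k ! i \<in> F \<and> i \<in> participants (take k ls))"
    have "settled \<longrightarrow> active"
      unfolding active_def settled_def using participants_take_mono by blast
    moreover have "i \<notin> ?T \<Longrightarrow> cs ! j ! i = cs ! Suc j ! i"
      using step_type_frame[OF step_type_run[OF j] i] .
    then have "map (hat_to_tilde F) (lift_config ?T ?x (cs ! Suc j)) ! i =
        hat_to_tilde F (if i \<in> ?T then lift (mark active settled (cs ! j ! i)) (cs ! Suc j ! i)
          else mark active settled (cs ! Suc j ! i))"
      using i by (auto simp: marked_config_def nth_lift_config active_def settled_def)
    moreover have "(\<exists>k\<le>Suc j. cs ! k ! i \<in> F \<and> i \<in> participants (take k ls)) \<longleftrightarrow>
        settled \<or> (active \<or> i \<in> ?T) \<and> cs ! Suc j ! i \<in> F"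
      unfolding settled_def active_def using participants_take_Suc[OF j] by (auto simp: le_Suc_eq)
    then have "marked_config F cs ls (Suc j) ! i =
        mark (active \<or> i \<in> ?T) (settled \<or> (active \<or> i \<in> ?T) \<and> cs ! Suc j ! i \<in> F) (cs ! Suc j ! i)"
      using i len j by (simp add: marked_config_def active_def participants_take_Suc)
    ultimately show "map (hat_to_tilde F) (lift_config ?T ?x (cs ! Suc j)) ! i = marked_config F cs ls (Suc j) ! i"
      by (simp add: hat_to_tilde_lift_mark)
  qed (simp add: marked_config_def len)
  moreover have "step (inst_delta Q \<delta> F) ?x (lift_config ?T ?x (cs ! Suc j))"
    using step_type_lift_config(1)[OF st] unfolding step_def by blast
  ultimately show ?thesis
    using rtranclp_hat_to_tilde by (metis tranclp.r_into_trancl tranclp_rtranclp_tranclp)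
qed

lemma participants_subset_run: "participants ls \<subseteq> {..<length (cs ! 0)}"
proof
  fix i
  assume "i \<in> participants ls"
  then obtain j where j: "j < length ls" and "i \<in> snd (ls ! j)"
    by (auto simp: participants_def in_set_conv_nth)
  then have "i < length (cs ! j)"
    using step_type_subset[OF step_type_run[OF j]] by blast
  then show "i \<in> {..<length (cs ! 0)}"
    using length_nth_run[of j] j by simp
qed

lemma tranclp_marked_config:
  "0 < j \<Longrightarrow> j \<le> length ls \<Longrightarrow>
    (step (inst_delta Q \<delta> F))\<^sup>+\<^sup>+ (marked_config F cs ls 0) (marked_config F cs ls j)"
proof (induction j)
  case (Suc j)
  then show ?case
    using tranclp_marked_config_Suc[of j Q F] by (cases "j = 0") (auto simp: Suc_le_eq intro: tranclp_trans)
qed simp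

context
  fixes F :: "'q set"
  assumes cycle: "cs ! length ls = cs ! 0"
    and visits: "\<forall>i\<in>participants ls. \<exists>s\<in>set cs. s ! i \<in> F"
begin

lemma participant_settled_in_cycle:
  assumes "i \<in> participants ls"
  shows "\<exists>k\<le>length ls. cs ! k ! i \<in> F \<and> i \<in> participants (take k ls)"
proof -
  from bspec[OF visits assms] obtain s where s: "s \<in> set cs" "s ! i \<in> F" ..
  then obtain k where "k < length cs" "cs ! k = s"
    unfolding in_set_conv_nth by blast
  then have k: "k \<le> length ls" "cs ! k ! i \<in> F"
    using run s(2) by (simp_all add: labelled_run_def)
  show ?thesis
  proof (cases "i \<in> participants (take k ls)")
    case True
    with k show ?thesis
      by auto
  next
    case False
    \<comment> \<open>Idle before its first step, the client is in the same F-state at the end of the cycle.\<close>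
    have "i < length (cs ! 0)"
      using participants_subset_run assms by blast
    with False have "cs ! length ls ! i \<in> F"
      using nth_run_before_participation[OF k(1)] k(2) cycle by simp
    with assms show ?thesis
      by (intro exI[of _ "length ls"]) simp
  qed
qed

lemma tilde_to_plain_marked_config_cycle:
  assumes "set (cs ! 0) \<subseteq> Q"
  shows "map (tilde_to_plain Q) (marked_config F cs ls (length ls)) = map Plain (cs ! 0)"
proof (rule nth_equalityI)
  fix i
  assume "i < length (map (tilde_to_plain Q) (marked_config F cs ls (length ls)))"
  then have i: "i < length (cs ! 0)"
    by (simp add: marked_config_def cycle)
  then have "cs ! 0 ! i \<in> Q"
    using assms by auto
  then show "map (tilde_to_plain Q) (marked_config F cs ls (length ls)) ! i = map Plain (cs ! 0) ! i"
    using i participant_settled_in_cycle by (simp add: marked_config_def cycle tilde_to_plain_mark)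
qed (simp add: marked_config_def cycle)

end

end

lemma tranclp_Plain_if_good:
  assumes "good \<delta> F c c" and "set c \<subseteq> Q"
  shows "(step (inst_delta Q \<delta> F))\<^sup>+\<^sup>+ (map Plain c) (map Plain c)"
proof -
  obtain cs ls where run: "labelled_run \<delta> cs ls" and "ls \<noteq> []" and "hd cs = c" and "last cs = c"
    and visits: "\<forall>i\<in>participants ls. \<exists>s\<in>set cs. s ! i \<in> F"
    using assms(1) unfolding good_iff_labelled_run by blast
  have len: "length cs = Suc (length ls)"
    using run by (simp add: labelled_run_def)
  then have cs0: "cs ! 0 = c" and csn: "cs ! length ls = c"
    using \<open>hd cs = c\<close> \<open>last cs = c\<close> by (metis hd_conv_nth Zero_not_Suc list.size(3),
        metis last_conv_nth diff_Suc_1 Zero_not_Suc list.size(3))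
  have "(step (inst_delta Q \<delta> F))\<^sup>+\<^sup>+ (map Plain c) (marked_config F cs ls (length ls))"
    using tranclp_marked_config[OF run, of "length ls" Q F] \<open>ls \<noteq> []\<close> marked_config_0[of F cs ls] cs0
    by simp
  moreover have "(step (inst_delta Q \<delta> F))\<^sup>*\<^sup>* (marked_config F cs ls (length ls)) (map Plain c)"
    using rtranclp_tilde_to_plain[of Q \<delta> F "marked_config F cs ls (length ls)"]
      tilde_to_plain_marked_config_cycle[OF run _ visits] assms(2) cs0 csn by simp
  ultimately show ?thesis
    by (rule tranclp_rtranclp_tranclp)
qed

section \<open>Good cycles from instrumented cycles\<close>

text \<open>Invariant of the backward direction, established from the end of an instrumented run: a hatted
  client, and a plain client that takes part in a later step, must still visit F.\<close>
definition obligations_met :: "'q set \<Rightarrow> 'q istate list \<Rightarrow> 'q list list \<Rightarrow> ('d \<times> nat set) list \<Rightarrow> bool" where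
  "obligations_met F x cs ls \<longleftrightarrow> (\<forall>i<length x.
     x ! i \<in> range Hat \<or> x ! i \<in> range Plain \<and> i \<in> participants ls \<longrightarrow> (\<exists>s\<in>set cs. s ! i \<in> F))"

lemma obligations_met_Some:
  assumes st: "step_type (inst_delta Q \<delta> F) x (Some a) T x'" and met: "obligations_met F x' cs ls"
  shows "obligations_met F x (c # cs) ((a, T) # ls)"
  unfolding obligations_met_def
proof (intro allI impI)
  fix i
  assume i: "i < length x"
    and owes: "x ! i \<in> range Hat \<or> x ! i \<in> range Plain \<and> i \<in> participants ((a, T) # ls)"
  from step_type_proj(2)[OF st] have "x' ! i = lift_config T x (map proj x') ! i"
    by (rule arg_cong)
  also have "\<dots> = (if i \<in> T then lift (x ! i) (proj (x' ! i)) else x ! i)"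
    using i step_type_length[OF st] by (simp add: nth_lift_config)
  finally have "x' ! i = (if i \<in> T then lift (x ! i) (proj (x' ! i)) else x ! i)" .
  then have "x' ! i \<in> range Hat \<or> x' ! i \<in> range Plain \<and> i \<in> participants ls"
    using owes by (cases "x ! i") (auto split: if_splits)
  then show "\<exists>s\<in>set (c # cs). s ! i \<in> F"
    using met i step_type_length[OF st] by (auto simp: obligations_met_def)
qed

lemma obligations_met_None:
  assumes st: "step_type (inst_delta Q \<delta> F) x None T x'" and met: "obligations_met F x' cs ls"
    and hd: "hd cs = map proj x'" and "cs \<noteq> []"
  shows "obligations_met F x cs ls"
proof -
  obtain i0 where i0: "i0 < length x" and x': "x' = x[i0 := x' ! i0]"
    and send: "(x ! i0, Snd None, x' ! i0) \<in> inst_delta Q \<delta> F"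
    using st by (rule step_type_None)
  have "\<exists>s\<in>set cs. s ! i0 \<in> F" if "x ! i0 \<in> range Hat"
  proof -
    have "proj (x' ! i0) \<in> F"
      using send that by (auto simp: inst_delta_Snd_None_iff)
    then show ?thesis
      using hd i0 \<open>cs \<noteq> []\<close> step_type_length[OF st] by (metis hd_in_set nth_map)
  qed
  moreover have "x ! i0 \<notin> range Plain"
    using send by (auto simp: inst_delta_Snd_None_iff)
  moreover have "x' ! i = x ! i" if "i \<noteq> i0" for i
    using x' that by (metis nth_list_update_neq)
  ultimately show ?thesis
    using met step_type_length[OF st] unfolding obligations_met_def by metis
qed

lemma labelled_run_of_rtranclp:
  assumes "(step (inst_delta Q \<delta> F))\<^sup>*\<^sup>* x y" and "\<forall>i<length y. y ! i \<notin> range Hat"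
  shows "\<exists>cs ls. labelled_run \<delta> cs ls \<and> hd cs = map proj x \<and> last cs = map proj y \<and>
    obligations_met F x cs ls"
  using assms(1)
proof (induction rule: converse_rtranclp_induct)
  case base
  have "obligations_met F y [map proj y] []"
    using assms(2) by (simp add: obligations_met_def)
  then show ?case
    using labelled_run_singleton by fastforce
next
  case (step x x')
  from step.IH obtain cs ls where run: "labelled_run \<delta> cs ls" and hd: "hd cs = map proj x'"
    and last: "last cs = map proj y" and met: "obligations_met F x' cs ls"
    by blast
  from step.hyps(1) obtain a T where st: "step_type (inst_delta Q \<delta> F) x a T x'"
    unfolding step_def by blast
  have "cs \<noteq> []"
    using run by (auto simp: labelled_run_def)
  show ?case
  proof (cases a)
    case None
    then show ?thesis
      using run hd last obligations_met_None[OF st[unfolded None] met hd \<open>cs \<noteq> []\<close>]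
        map_proj_step_None[OF st[unfolded None]] by auto
  next
    case (Some b)
    then have "labelled_run \<delta> (map proj x # cs) ((b, T) # ls)"
      using labelled_run_Cons[OF run] step_type_proj(1)[OF st[unfolded Some]] hd by simp
    then show ?thesis
      using last \<open>cs \<noteq> []\<close> obligations_met_Some[OF st[unfolded Some] met]
      by (intro exI[of _ "map proj x # cs"] exI[of _ "(b, T) # ls"]) auto
  qed
qed

lemma good_if_tranclp_Plain:
  assumes "(step (inst_delta Q \<delta> F))\<^sup>+\<^sup>+ (map Plain c) (map Plain c)"
  shows "good \<delta> F c c"
proof -
  obtain x where "step (inst_delta Q \<delta> F) (map Plain c) x"
    and rest: "(step (inst_delta Q \<delta> F))\<^sup>*\<^sup>* x (map Plain c)"
    using tranclpD[OF assms] by blast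
  then obtain a T where st: "step_type (inst_delta Q \<delta> F) (map Plain c) a T x"
    unfolding step_def by blast
  have "a \<noteq> None"
  proof
    assume "a = None"
    then obtain i where "i < length c" "(Plain (c ! i), Snd None, x ! i) \<in> inst_delta Q \<delta> F"
      using st by (auto elim: step_type_None)
    then show False
      by (simp add: inst_delta_Snd_None_iff)
  qed
  then obtain b where Some: "a = Some b"
    by blast
  obtain cs ls where run: "labelled_run \<delta> cs ls" and hd: "hd cs = map proj x"
    and last: "last cs = c" and met: "obligations_met F x cs ls"
    using labelled_run_of_rtranclp[OF rest] by auto
  have run': "labelled_run \<delta> (c # cs) ((b, T) # ls)"
    using labelled_run_Cons[OF run] step_type_proj(1)[OF st[unfolded Some]] hd by simp
  have "obligations_met F (map Plain c) (c # cs) ((b, T) # ls)"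
    using obligations_met_Some[OF st[unfolded Some] met] by simp
  moreover have "participants ((b, T) # ls) \<subseteq> {..<length c}"
    using participants_subset_run[OF run'] by simp
  ultimately have "\<forall>i\<in>participants ((b, T) # ls). \<exists>s\<in>set (c # cs). s ! i \<in> F"
    by (auto simp: obligations_met_def)
  moreover have "cs \<noteq> []"
    using run by (auto simp: labelled_run_def)
  ultimately show ?thesis
    unfolding good_iff_labelled_run using run' last
    by (intro exI[of _ "c # cs"] exI[of _ "(b, T) # ls"]) auto
qed

theorem lemma7:
  fixes Q :: "'q set" and D :: "'d set" and I :: "'q set"
    and \<delta> :: "('q \<times> 'd bop \<times> 'q) set" and F :: "'q set"
    and c0 c :: "'q list"
  assumes "finite Q" and "finite D" and "I \<subseteq> Q"
    and "\<delta> \<subseteq> Q \<times> Ops D \<times> Q"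
    and "F \<subseteq> Q"
    and "set c0 \<subseteq> Q" and "set c \<subseteq> Q" and "length c0 = length c"
  shows "((step \<delta>)\<^sup>*\<^sup>* c0 c \<and> good \<delta> F c c) \<longleftrightarrow>
         ((step (inst_delta Q \<delta> F))\<^sup>*\<^sup>* (map Tilde c0) (map Plain c) \<and>
          (step (inst_delta Q \<delta> F))\<^sup>+\<^sup>+ (map Plain c) (map Plain c))"
proof
  assume "(step \<delta>)\<^sup>*\<^sup>* c0 c \<and> good \<delta> F c c"
  then have "(step (inst_delta Q \<delta> F))\<^sup>*\<^sup>* (map Tilde c0) (map Tilde c)"
    and "(step (inst_delta Q \<delta> F))\<^sup>+\<^sup>+ (map Plain c) (map Plain c)"
    using rtranclp_step_map_Tilde tranclp_Plain_if_good \<open>set c \<subseteq> Q\<close> by auto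
  moreover have "map (tilde_to_plain Q) (map Tilde c) = map Plain c"
    using \<open>set c \<subseteq> Q\<close> by (auto simp: tilde_to_plain_def)
  then have "(step (inst_delta Q \<delta> F))\<^sup>*\<^sup>* (map Tilde c) (map Plain c)"
    using rtranclp_tilde_to_plain[of Q \<delta> F "map Tilde c"] by (simp only:)
  ultimately show "(step (inst_delta Q \<delta> F))\<^sup>*\<^sup>* (map Tilde c0) (map Plain c) \<and>
      (step (inst_delta Q \<delta> F))\<^sup>+\<^sup>+ (map Plain c) (map Plain c)"
    by (blast intro: rtranclp_trans)
next
  assume "(step (inst_delta Q \<delta> F))\<^sup>*\<^sup>* (map Tilde c0) (map Plain c) \<and>
      (step (inst_delta Q \<delta> F))\<^sup>+\<^sup>+ (map Plain c) (map Plain c)"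
  then show "(step \<delta>)\<^sup>*\<^sup>* c0 c \<and> good \<delta> F c c"
    using rtranclp_step_map_proj[of Q \<delta> F "map Tilde c0" "map Plain c"] good_if_tranclp_Plain by auto
qed

end
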